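(* Let $m,k\in\mathbb{N}$ and let $\beta\in\mathbb{C}$ with $\beta,\ 2\beta+2m+2k+2\notin\mathbb{Z}_0^-$. Then \[ {}_3F_2\left[\begin{array}{r} -2m-1,\ 2+2m,\ \beta;\\ -2m-2k-1,\ 2\beta+2m+2k+2;\end{array}1\right]_{2m+1}=\frac{(k+1)(2\beta+2m+2k+1)(2\beta+2k+1)_{2m}\left(2+k\right)_{2m}}{(2m+2k+1)(\beta+k+1)(2k+1)_{2m}\left(2+\beta+k\right)_{2m}}. \]
   Context: $\mathbb{N}=\{1,2,3,\dots\}$, $\mathbb{Z}_0^-=\{0,-1,-2,\dots\}$. For $a\in\mathbb{C}$ and $n\in\mathbb{N}_0$, $(a)_0=1$ and $(a)_n=a(a+1)\cdots(a+n-1)$. For $N\in\mathbb{N}_0$, ${}_3F_2\left[\begin{array}{r} a_1,a_2,a_3;\\ b_1,b_2;\end{array}z\right]_N=\sum_{n=0}^{N}\frac{(a_1)_n(a_2)_n(a_3)_n}{(b_1)_n(b_2)_n}\frac{z^n}{n!}$ (the sum of the first $N+1$ terms), defined whenever $(b_1)_n(b_2)_n\neq0$ for $0\le n\le N$. *)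

theory Defs
  imports Complex_Main
begin

definition hyp3F2_trunc :: "complex \<Rightarrow> complex \<Rightarrow> complex \<Rightarrow> complex \<Rightarrow> complex \<Rightarrow> complex \<Rightarrow> nat \<Rightarrow> complex" where
  "hyp3F2_trunc a1 a2 a3 b1 b2 z N =
     (\<Sum>n=0..N. pochhammer a1 n * pochhammer a2 n * pochhammer a3 n
                 / (pochhammer b1 n * pochhammer b2 n) * z ^ n / of_nat (fact n))"

definition nonpos_int_c :: "complex \<Rightarrow> bool" where
  "nonpos_int_c z \<longleftrightarrow> (\<exists>n::nat. z = - of_nat n)"

end

theory Submission
  imports Defs
begin

(* For every N, the terminating sum S N = 3F2[-N, N+1, b; -N-2k, 2b+N+2k+1; 1] satisfies the
   first-order recurrence
     (b+N+k+1) (N+2k+1) S (N+1) = (2b+N+2k+1) (N+k+1) S N,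
   proved by creative telescoping: the recurrence operator applied to the summand is the forward
   difference of an explicit hypergeometric certificate that vanishes at both ends of the range.
   Hence S N is the ratio of Pochhammer symbols closed_form N k b whenever 2b is not a nonpositive
   integer (so that no denominator vanishes), and by continuity in b, approaching through non-real
   values, whenever both sides are defined; the theorem is the case N = 2m+1. *)

definition hyp3F2_coeff :: "'a::field_char_0 \<Rightarrow> 'a \<Rightarrow> 'a \<Rightarrow> 'a \<Rightarrow> 'a \<Rightarrow> nat \<Rightarrow> 'a" where
  "hyp3F2_coeff a1 a2 a3 b1 b2 n =
     pochhammer a1 n * pochhammer a2 n * pochhammer a3 n
       / (pochhammer b1 n * pochhammer b2 n) / of_nat (fact n)"

lemma hyp3F2_trunc_eq_sum_coeff:
  "hyp3F2_trunc a1 a2 a3 b1 b2 z N = (\<Sum>n\<le>N. hyp3F2_coeff a1 a2 a3 b1 b2 n * z ^ n)"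
  unfolding hyp3F2_trunc_def hyp3F2_coeff_def atLeast0AtMost by (simp add: field_simps)

lemma hyp3F2_coeff_Suc:
  "hyp3F2_coeff a1 a2 a3 b1 b2 (Suc n) = hyp3F2_coeff a1 a2 a3 b1 b2 n
     * ((a1 + of_nat n) * (a2 + of_nat n) * (a3 + of_nat n)
        / ((b1 + of_nat n) * (b2 + of_nat n) * (of_nat n + 1)))"
  unfolding hyp3F2_coeff_def pochhammer_Suc fact_Suc of_nat_mult divide_inverse inverse_mult_distrib
  by (simp add: ac_simps)

lemma hyp3F2_coeff_eq_0:
  "N < n \<Longrightarrow> hyp3F2_coeff (- of_nat N) a2 a3 b1 b2 n = 0"
  unfolding hyp3F2_coeff_def by (simp add: pochhammer_of_nat_eq_0_lemma)

lemma pochhammer_plus_1: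
  fixes a :: "'a::field"
  assumes "a \<noteq> 0"
  shows "pochhammer (a + 1) n = pochhammer a n * (a + of_nat n) / a"
  using assms by (metis pochhammer_Suc pochhammer_rec nonzero_mult_div_cancel_left)

lemma hyp3F2_coeff_shift_a1:
  "a1 \<noteq> 0 \<Longrightarrow> hyp3F2_coeff (a1 + 1) a2 a3 b1 b2 n
     = hyp3F2_coeff a1 a2 a3 b1 b2 n * ((a1 + of_nat n) / a1)"
  unfolding hyp3F2_coeff_def by (simp add: pochhammer_plus_1) (simp add: ac_simps)

lemma hyp3F2_coeff_shift_a2:
  "a2 \<noteq> 0 \<Longrightarrow> hyp3F2_coeff a1 (a2 + 1) a3 b1 b2 n
     = hyp3F2_coeff a1 a2 a3 b1 b2 n * ((a2 + of_nat n) / a2)"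
  unfolding hyp3F2_coeff_def by (simp add: pochhammer_plus_1) (simp add: ac_simps)

lemma hyp3F2_coeff_shift_b1:
  "b1 \<noteq> 0 \<Longrightarrow> hyp3F2_coeff a1 a2 a3 (b1 + 1) b2 n
     = hyp3F2_coeff a1 a2 a3 b1 b2 n * (b1 / (b1 + of_nat n))"
  unfolding hyp3F2_coeff_def by (simp add: pochhammer_plus_1 divide_inverse mult_ac)

lemma hyp3F2_coeff_shift_b2:
  "b2 \<noteq> 0 \<Longrightarrow> hyp3F2_coeff a1 a2 a3 b1 (b2 + 1) n
     = hyp3F2_coeff a1 a2 a3 b1 b2 n * (b2 / (b2 + of_nat n))"
  unfolding hyp3F2_coeff_def by (simp add: pochhammer_plus_1 divide_inverse mult_ac)

lemma add_of_nat_neq_0_if_not_nonpos_int: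
  "\<not> nonpos_int_c z \<Longrightarrow> z + of_nat n \<noteq> 0"
  unfolding nonpos_int_c_def by (metis add.commute add_eq_0_iff)

lemma not_nonpos_int_c_add_of_nat:
  "\<not> nonpos_int_c z \<Longrightarrow> \<not> nonpos_int_c (z + of_nat j)"
  unfolding nonpos_int_c_def by (metis add_diff_cancel_right' minus_diff_eq of_nat_add diff_minus_eq_add)

lemma pochhammer_neq_0_if_not_nonpos_int:
  "\<not> nonpos_int_c z \<Longrightarrow> pochhammer z n \<noteq> 0"
  unfolding nonpos_int_c_def pochhammer_eq_0_iff by blast

definition summand :: "nat \<Rightarrow> nat \<Rightarrow> complex \<Rightarrow> nat \<Rightarrow> complex" where
  "summand N k b n = hyp3F2_coeff (- of_nat N) (of_nat N + 1) b
     (- of_nat N - 2 * of_nat k) (2 * b + of_nat N + 2 * of_nat k + 1) n"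

definition certificate :: "nat \<Rightarrow> nat \<Rightarrow> complex \<Rightarrow> nat \<Rightarrow> complex" where
  "certificate N k b n =
     - of_nat n * (of_nat N + 2 * of_nat k + 1) * (2 * b + of_nat N + 2 * of_nat k + 1) / (of_nat N + 1)
     * hyp3F2_coeff (- of_nat N - 1) (of_nat N + 1) b
         (- of_nat N - 2 * of_nat k - 1) (2 * b + of_nat N + 2 * of_nat k + 1) n"

definition closed_form :: "nat \<Rightarrow> nat \<Rightarrow> complex \<Rightarrow> complex" where
  "closed_form N k b =
     pochhammer (2 * b + 2 * of_nat k + 1) N * pochhammer (of_nat k + 1) N
       / (pochhammer (b + of_nat k + 1) N * pochhammer (2 * of_nat k + 1) N)"

lemma summand_eq_0: "N < n \<Longrightarrow> summand N k b n = 0"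
  unfolding summand_def by (rule hyp3F2_coeff_eq_0)

lemma certificate_eq_0:
  assumes "N + 1 < n"
  shows "certificate N k b n = 0"
proof -
  have "(- of_nat N - 1 :: complex) = - of_nat (N + 1)"
    by simp
  then show ?thesis
    unfolding certificate_def by (simp only: hyp3F2_coeff_eq_0[OF assms] mult_zero_right)
qed

lemma certificate_Suc_diff:
  fixes b :: complex
  assumes b: "\<not> nonpos_int_c (2 * b)" and k: "k \<ge> 1" and n: "n \<le> N + 1"
  shows "certificate N k b (Suc n) - certificate N k b n =
      (b + of_nat N + of_nat k + 1) * (of_nat N + 2 * of_nat k + 1) * summand (N + 1) k b n
    - (2 * b + of_nat N + 2 * of_nat k + 1) * (of_nat N + of_nat k + 1) * summand N k b n"
proof -
  define x y z where "x = (of_nat N :: complex)" and "y = (of_nat k :: complex)"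
    and "z = (of_nat n :: complex)"
  define d where "d = 2 * b + x + 2 * y + 1"
  define W where "W = hyp3F2_coeff (- x - 1) (x + 1) b (- x - 2 * y - 1) d n"
  have d: "d \<noteq> 0" "d + z \<noteq> 0"
    using add_of_nat_neq_0_if_not_nonpos_int[OF b, of "N + 2 * k + 1"]
      add_of_nat_neq_0_if_not_nonpos_int[OF b, of "N + 2 * k + 1 + n"]
    by (simp_all add: d_def x_def y_def z_def add_ac)
  have x: "x + 1 \<noteq> 0" "- x - 1 \<noteq> 0" and z: "z + 1 \<noteq> 0"
  proof -
    have "x + 1 = of_nat (Suc N)" "- x - 1 = - of_nat (Suc N)" "z + 1 = of_nat (Suc n)"
      unfolding x_def z_def by simp_all
    then show "x + 1 \<noteq> 0" "- x - 1 \<noteq> 0" "z + 1 \<noteq> 0"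
      by (simp_all only: neg_equal_0_iff_equal of_nat_neq_0 not_False_eq_True)
  qed
  have c: "- x - 2 * y - 1 \<noteq> 0" "- x - 2 * y - 1 + z \<noteq> 0"
  proof -
    have "- x - 2 * y - 1 = 0 - of_nat (N + 2 * k + 1)"
      "- x - 2 * y - 1 + z = of_nat n - of_nat (N + 2 * k + 1)"
      unfolding x_def y_def z_def by simp_all
    then show "- x - 2 * y - 1 \<noteq> 0" "- x - 2 * y - 1 + z \<noteq> 0"
      using k n by (simp_all only: right_minus_eq of_nat_eq_iff of_nat_0_eq_iff)
  qed
  have F1: "summand (N + 1) k b n = W * ((x + 1 + z) / (x + 1)) * (d / (d + z))"
  proof -
    have "- of_nat (N + 1) = - x - 1" "of_nat (N + 1) + 1 = x + 1 + 1"
      "- x - 1 - 2 * of_nat k = - x - 2 * y - 1" "2 * b + of_nat (N + 1) + 2 * of_nat k + 1 = d + 1"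
      unfolding x_def y_def d_def by simp_all
    then have "summand (N + 1) k b n
        = hyp3F2_coeff (- x - 1) (x + 1 + 1) b (- x - 2 * y - 1) (d + 1) n"
      unfolding summand_def by (simp only:)
    also have "\<dots> = W * ((x + 1 + z) / (x + 1)) * (d / (d + z))"
      using d unfolding W_def z_def hyp3F2_coeff_shift_a2[OF x(1)]
      by (simp add: hyp3F2_coeff_shift_b2) (simp add: ac_simps)
    finally show ?thesis .
  qed
  have F0: "summand N k b n
      = W * ((- x - 1 + z) / (- x - 1)) * ((- x - 2 * y - 1) / (- x - 2 * y - 1 + z))"
  proof -
    have "summand N k b n = hyp3F2_coeff (- x - 1 + 1) (x + 1) b (- x - 2 * y - 1 + 1) d n"
      unfolding summand_def d_def x_def y_def by simp
    also have "\<dots> = W * ((- x - 1 + z) / (- x - 1)) * ((- x - 2 * y - 1) / (- x - 2 * y - 1 + z))"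
      unfolding W_def z_def hyp3F2_coeff_shift_a1[OF x(2)] hyp3F2_coeff_shift_b1[OF c(1)]
      by (simp add: ac_simps)
    finally show ?thesis .
  qed
  have G0: "certificate N k b n = - z * (x + 2 * y + 1) * d / (x + 1) * W"
    unfolding certificate_def W_def d_def x_def y_def z_def by (simp add: algebra_simps)
  have G1: "certificate N k b (Suc n) = - (z + 1) * (x + 2 * y + 1) * d / (x + 1)
      * (W * ((- x - 1 + z) * (x + 1 + z) * (b + z) / ((- x - 2 * y - 1 + z) * (d + z) * (z + 1))))"
    unfolding certificate_def W_def hyp3F2_coeff_Suc d_def x_def y_def z_def
    by (simp add: algebra_simps)
  have "certificate N k b (Suc n) - certificate N k b n =
      (b + x + y + 1) * (x + 2 * y + 1) * summand (N + 1) k b n - d * (x + y + 1) * summand N k b n"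
    unfolding F0 F1 G0 G1 using x c d z
    by (simp add: divide_simps) (insert d_def, algebra)
  then show ?thesis
    unfolding x_def y_def d_def .
qed

lemma sum_summand_Suc:
  fixes b :: complex
  assumes b: "\<not> nonpos_int_c (2 * b)" and k: "k \<ge> 1"
  shows "(b + of_nat N + of_nat k + 1) * (of_nat N + 2 * of_nat k + 1)
           * (\<Sum>n\<le>N + 1. summand (N + 1) k b n)
       = (2 * b + of_nat N + 2 * of_nat k + 1) * (of_nat N + of_nat k + 1)
           * (\<Sum>n\<le>N. summand N k b n)"
    (is "?A * ?K * _ = ?d * ?L * _")
proof -
  have "certificate N k b (N + 2) = 0"
    by (rule certificate_eq_0) simp
  then have "0 = certificate N k b (N + 2) - certificate N k b 0"
    by (simp add: certificate_def)
  also have "\<dots> = (\<Sum>n\<le>N + 1. certificate N k b (Suc n) - certificate N k b n)"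
    by (simp only: sum_lessThan_telescope lessThan_Suc_atMost[symmetric]) simp
  also have "\<dots> = (\<Sum>n\<le>N + 1. ?A * ?K * summand (N + 1) k b n - ?d * ?L * summand N k b n)"
    by (intro sum.cong refl certificate_Suc_diff b k) simp
  also have "\<dots> = ?A * ?K * (\<Sum>n\<le>N + 1. summand (N + 1) k b n)
      - ?d * ?L * (\<Sum>n\<le>N. summand N k b n)"
    by (simp add: sum_subtractf sum_distrib_left summand_eq_0 ring_distribs)
  finally show ?thesis
    by simp
qed

lemma closed_form_Suc:
  "closed_form (Suc N) k b = closed_form N k b
     * ((2 * b + of_nat N + 2 * of_nat k + 1) * (of_nat N + of_nat k + 1)
        / ((b + of_nat N + of_nat k + 1) * (of_nat N + 2 * of_nat k + 1)))"
  unfolding closed_form_def pochhammer_Suc divide_inverse inverse_mult_distrib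
  by (simp add: ac_simps)

lemma sum_summand_eq_closed_form:
  fixes b :: complex
  assumes b: "\<not> nonpos_int_c (2 * b)" and k: "k \<ge> 1"
  shows "(\<Sum>n\<le>N. summand N k b n) = closed_form N k b"
proof (induction N)
  case 0
  show ?case
    by (simp add: summand_def hyp3F2_coeff_def closed_form_def)
next
  case (Suc N)
  have "2 * (b + of_nat N + of_nat k + 1) = 2 * b + of_nat (2 * N + 2 * k + 2)"
    by (simp add: algebra_simps)
  then have A: "b + of_nat N + of_nat k + 1 \<noteq> 0"
    using add_of_nat_neq_0_if_not_nonpos_int[OF b] by (metis mult_zero_right)
  have K: "(of_nat N + 2 * of_nat k + 1 :: complex) \<noteq> 0"
    by (metis of_nat_Suc of_nat_add of_nat_mult of_nat_numeral of_nat_neq_0 add.commute)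
  have "(b + of_nat N + of_nat k + 1) * (of_nat N + 2 * of_nat k + 1)
        * (\<Sum>n\<le>Suc N. summand (Suc N) k b n)
      = (2 * b + of_nat N + 2 * of_nat k + 1) * (of_nat N + of_nat k + 1) * closed_form N k b"
    using sum_summand_Suc[OF b k, of N] Suc.IH by simp
  then show ?case
    using A K unfolding closed_form_Suc by (simp add: divide_simps) (simp add: ac_simps)
qed

lemma isCont_pochhammer' [continuous_intros]:
  fixes f :: "'a::t2_space \<Rightarrow> 'b::real_normed_field"
  assumes "isCont f x"
  shows "isCont (\<lambda>w. pochhammer (f w) n) x"
  using assms by (rule isCont_o2[where g = "\<lambda>z. pochhammer z n"]) (rule isCont_pochhammer)

lemma isCont_hyp3F2_trunc [continuous_intros]:
  fixes a1 a2 a3 b1 b2 z :: "'a::t2_space \<Rightarrow> complex"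
  assumes "isCont a1 x" "isCont a2 x" "isCont a3 x" "isCont b1 x" "isCont b2 x" "isCont z x"
    and "\<And>n. n \<le> N \<Longrightarrow> pochhammer (b1 x) n * pochhammer (b2 x) n \<noteq> 0"
  shows "isCont (\<lambda>w. hyp3F2_trunc (a1 w) (a2 w) (a3 w) (b1 w) (b2 w) (z w) N) x"
  unfolding hyp3F2_trunc_def using assms by (intro continuous_intros) auto

lemma isCont_eq_if_eq_off_real_line:
  fixes f g :: "complex \<Rightarrow> 'a::t2_space"
  assumes "isCont f z" "isCont g z" and eq: "\<And>w. Im w \<noteq> 0 \<Longrightarrow> f w = g w"
  shows "f z = g z"
proof (cases "Im z = 0")
  case True
  define w where "w j = z + \<i> * of_real (inverse (real (Suc j)))" for j
  have "w \<longlonglongrightarrow> z + \<i> * of_real 0"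
    unfolding w_def by (intro tendsto_intros LIMSEQ_inverse_real_of_nat)
  then have "w \<longlonglongrightarrow> z"
    by simp
  moreover have "f (w j) = g (w j)" for j
    using True by (intro eq) (simp add: w_def)
  ultimately show ?thesis
    using isCont_tendsto_compose[OF assms(1)] isCont_tendsto_compose[OF assms(2)]
    by (metis (no_types, lifting) LIMSEQ_unique ext)
next
  case False
  then show ?thesis
    by (rule eq)
qed

theorem hyp3F2_trunc_eq_closed_form:
  fixes b :: complex
  assumes b: "\<not> nonpos_int_c b" and d: "\<not> nonpos_int_c (2 * b + of_nat N + 2 * of_nat k + 1)"
    and k: "k \<ge> 1"
  shows "hyp3F2_trunc (- of_nat N) (of_nat N + 1) b (- of_nat N - 2 * of_nat k)
           (2 * b + of_nat N + 2 * of_nat k + 1) 1 N = closed_form N k b"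
proof (rule isCont_eq_if_eq_off_real_line[where f = "\<lambda>w. hyp3F2_trunc (- of_nat N) (of_nat N + 1) w
    (- of_nat N - 2 * of_nat k) (2 * w + of_nat N + 2 * of_nat k + 1) 1 N"])
  have "(- of_nat N - 2 * of_nat k :: complex) = - of_nat (N + 2 * k)"
    by simp
  then have "pochhammer (- of_nat N - 2 * of_nat k :: complex) n \<noteq> 0" if "n \<le> N" for n
    using that by (simp only: pochhammer_of_nat_eq_0_iff)
  then show "isCont (\<lambda>w. hyp3F2_trunc (- of_nat N) (of_nat N + 1) w
      (- of_nat N - 2 * of_nat k) (2 * w + of_nat N + 2 * of_nat k + 1) 1 N) b"
    using pochhammer_neq_0_if_not_nonpos_int[OF d] by (intro continuous_intros) auto
next
  have "\<not> nonpos_int_c (2 * of_nat k + 1)"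
    by (auto simp: nonpos_int_c_def complex_eq_iff)
  then show "isCont (closed_form N k) b"
    using pochhammer_neq_0_if_not_nonpos_int[OF not_nonpos_int_c_add_of_nat[OF b, of "k + 1"]]
      pochhammer_neq_0_if_not_nonpos_int
    unfolding closed_form_def[abs_def] by (intro continuous_intros) (simp_all add: add_ac)
next
  fix w :: complex
  assume "Im w \<noteq> 0"
  then have "\<not> nonpos_int_c (2 * w)"
    by (auto simp: nonpos_int_c_def complex_eq_iff)
  then show "hyp3F2_trunc (- of_nat N) (of_nat N + 1) w (- of_nat N - 2 * of_nat k)
      (2 * w + of_nat N + 2 * of_nat k + 1) 1 N = closed_form N k w"
    using sum_summand_eq_closed_form[OF _ k] by (simp add: hyp3F2_trunc_eq_sum_coeff summand_def)
qed

theorem mainTheorem8: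
  fixes m k :: nat and \<beta> :: complex
  assumes "m \<ge> 1" and "k \<ge> 1"
    and "\<not> nonpos_int_c \<beta>"
    and "\<not> nonpos_int_c (2*\<beta> + 2*of_nat m + 2*of_nat k + 2)"
  shows "hyp3F2_trunc (- 2*of_nat m - 1) (2 + 2*of_nat m) \<beta>
            (- 2*of_nat m - 2*of_nat k - 1) (2*\<beta> + 2*of_nat m + 2*of_nat k + 2) 1 (2*m+1)
       = (of_nat k + 1) * (2*\<beta> + 2*of_nat m + 2*of_nat k + 1)
           * pochhammer (2*\<beta> + 2*of_nat k + 1) (2*m) * pochhammer (2 + of_nat k) (2*m)
         / ((2*of_nat m + 2*of_nat k + 1) * (\<beta> + of_nat k + 1)
           * pochhammer (2*of_nat k + 1) (2*m) * pochhammer (2 + \<beta> + of_nat k) (2*m))"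
proof -
  define N where "N = 2 * m + 1"
  have params: "(- 2 * of_nat m - 1 :: complex) = - of_nat N"
    "(2 + 2 * of_nat m :: complex) = of_nat N + 1"
    "(- 2 * of_nat m - 2 * of_nat k - 1 :: complex) = - of_nat N - 2 * of_nat k"
    "2 * \<beta> + 2 * of_nat m + 2 * of_nat k + 2 = 2 * \<beta> + of_nat N + 2 * of_nat k + 1"
    unfolding N_def by simp_all
  have "closed_form N k \<beta> = (of_nat k + 1) * (2*\<beta> + 2*of_nat m + 2*of_nat k + 1)
           * pochhammer (2*\<beta> + 2*of_nat k + 1) (2*m) * pochhammer (2 + of_nat k) (2*m)
         / ((2*of_nat m + 2*of_nat k + 1) * (\<beta> + of_nat k + 1)
           * pochhammer (2*of_nat k + 1) (2*m) * pochhammer (2 + \<beta> + of_nat k) (2*m))"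
    unfolding closed_form_def N_def Suc_eq_plus1[symmetric]
      pochhammer_Suc[of "2 * \<beta> + 2 * of_nat k + 1"] pochhammer_Suc[of "2 * of_nat k + 1"]
      pochhammer_rec[of "of_nat k + 1"] pochhammer_rec[of "\<beta> + of_nat k + 1"]
    by (simp add: ac_simps divide_inverse)
  moreover have "\<not> nonpos_int_c (2 * \<beta> + of_nat N + 2 * of_nat k + 1)"
    using assms(4) unfolding params .
  ultimately show ?thesis
    unfolding params N_def[symmetric]
    using hyp3F2_trunc_eq_closed_form[OF assms(3) _ assms(2)] by simp
qed

end
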